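(* Let $Q$ be a quandle with a finite presentation $\langle S\mid R\rangle$, let $X$ be a quandle, $A$ an abelian group and $\theta:X^2\to A$ a quandle $2$-cocycle, and let $f_\theta=(f_\theta,0)$ be the Alexander pair associated with $\theta$ (pulled back to $Q$ via a quandle homomorphism $Q\to X$, which is suppressed from the notation). Then for any element $x^{y_{1}^{\varepsilon_1}\cdots y_{n}^{\varepsilon_n}}\in FQ(S)$ (with $x,y_1,\dots,y_n\in FQ(S)$, $\varepsilon_i\in\{\pm1\}$) and any $z\in S$, \[ \frac{\partial_{f_{\theta}}}{\partial{z}}\bigl(x^{y_{1}^{\varepsilon_1}\cdots y_{n}^{\varepsilon_n}}\bigr)=1\cdot\left(\sum^{n}_{i=1}\varepsilon_i\,\theta\bigl(x^{y_{1}^{\varepsilon_1}\cdots y_{i-1}^{\varepsilon_{i-1}}y_i^{\frac{\varepsilon_i-1}{2}}},\,y_i\bigr)\right)\frac{\partial_{f_{\theta}}}{\partial{z}}(x), \] where elements of $FQ(S)$ inside $\theta$ are understood via their images in $X$.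
   Context: A quandle is a set $X$ with a binary operation $(x,y)\mapsto x^y$ such that $x^x=x$; for all $x,y$ there is a unique $z$ with $z^y=x$ (denoted $x^{y^{-1}}$); and $(x^y)^z=(x^z)^{(y^z)}$. We write $x^{yz}$ for $(x^y)^z$, and $x^{y^0}=x$. $FQ(S)$ denotes the free quandle on $S$, and $\langle S\mid R\rangle$ (with $R\subset FQ(S)^2$) is the quotient of $FQ(S)$ by the smallest congruence containing $R$. A quandle $2$-cocycle is a map $\theta:X^2\to A$ with $\theta(x,x)=0_A$ and $\theta(x,y)+\theta(x^y,z)=\theta(x,z)+\theta(x^z,y^z)$ for all $x,y,z$. In the group ring $\mathbb{Z}[A]$, $1\cdot a$ denotes the basis element corresponding to $a\in A$ (so $1\cdot 0_A$ is the unity). The Alexander pair associated with $\theta$ is $(f_\theta,0)$ with $f_\theta(x,y)=1\cdot\theta(x,y)\in\mathbb{Z}[A]$ and $0(x,y)=0$. For an Alexander pair $f=(f_1,f_2)$ of maps $Q\times Q\to R$ and $x_j\in S$, the $f$-derivative $\frac{\partial_f}{\partial x_j}:FQ(S)\to R$ is the map determined by $\frac{\partial_f}{\partial x_j}(x^y)=f_1(x,y)\frac{\partial_f}{\partial x_j}(x)+f_2(x,y)\frac{\partial_f}{\partial x_j}(y)$ for all $x,y\in FQ(S)$ (arguments of $f_1,f_2$ taken via the projection $FQ(S)\to Q$), and $\frac{\partial_f}{\partial x_j}(x_i)=1$ if $i=j$, $0$ otherwise, for $x_i\in S$. *)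

theory Defs
  imports Main "HOL-Library.Poly_Mapping"
begin

definition is_quandle :: "'x set \<Rightarrow> ('x \<Rightarrow> 'x \<Rightarrow> 'x) \<Rightarrow> bool" where
  "is_quandle X op \<longleftrightarrow>
     (\<forall>x\<in>X. \<forall>y\<in>X. op x y \<in> X) \<and>
     (\<forall>x\<in>X. op x x = x) \<and>
     (\<forall>x\<in>X. \<forall>y\<in>X. \<exists>!z. z \<in> X \<and> op z y = x) \<and>
     (\<forall>x\<in>X. \<forall>y\<in>X. \<forall>z\<in>X. op (op x y) z = op (op x z) (op y z))"

definition is_quandle_2cocycle ::
  "'x set \<Rightarrow> ('x \<Rightarrow> 'x \<Rightarrow> 'x) \<Rightarrow> ('x \<Rightarrow> 'x \<Rightarrow> 'a::ab_group_add) \<Rightarrow> bool" where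
  "is_quandle_2cocycle X op \<theta> \<longleftrightarrow>
     (\<forall>x\<in>X. \<theta> x x = 0) \<and>
     (\<forall>x\<in>X. \<forall>y\<in>X. \<forall>z\<in>X.
        \<theta> x y + \<theta> (op x y) z = \<theta> x z + \<theta> (op x z) (op y z))"

datatype 's qterm = QGen 's | QOp "'s qterm" "'s qterm" | QOpInv "'s qterm" "'s qterm"

text \<open>QOp x y stands for x^y, QOpInv x y for x^(y^-1).
  qcong is the congruence generated by the quandle axioms.\<close>
inductive qcong :: "'s qterm \<Rightarrow> 's qterm \<Rightarrow> bool" where
  qrefl: "qcong x x"
| qsym: "qcong x y \<Longrightarrow> qcong y x"
| qtrans: "qcong x y \<Longrightarrow> qcong y z \<Longrightarrow> qcong x z"
| qcong_op: "qcong x x' \<Longrightarrow> qcong y y' \<Longrightarrow> qcong (QOp x y) (QOp x' y')"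
| qcong_opinv: "qcong x x' \<Longrightarrow> qcong y y' \<Longrightarrow> qcong (QOpInv x y) (QOpInv x' y')"
| qidem: "qcong (QOp x x) x"
| qinv1: "qcong (QOp (QOpInv x y) y) x"
| qinv2: "qcong (QOpInv (QOp x y) y) x"
| qdist: "qcong (QOp (QOp x y) z) (QOp (QOp x z) (QOp y z))"

lemma equivp_qcong: "equivp qcong"
  by (rule equivpI; (rule reflpI sympI transpI)?)
     (auto intro: qcong.intros)

quotient_type 's fq = "'s qterm" / qcong
  by (rule equivp_qcong)

lift_definition fq_gen :: "'s \<Rightarrow> 's fq" is QGen .

lift_definition fq_op :: "'s fq \<Rightarrow> 's fq \<Rightarrow> 's fq" is QOp
  by (rule qcong_op)

lift_definition fq_opinv :: "'s fq \<Rightarrow> 's fq \<Rightarrow> 's fq" is QOpInv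
  by (rule qcong_opinv)

definition fq_act :: "'s fq \<Rightarrow> 's fq \<Rightarrow> int \<Rightarrow> 's fq" where
  "fq_act x y e = (if e = 1 then fq_op x y else fq_opinv x y)"

fun fq_pow :: "'s fq \<Rightarrow> 's fq list \<Rightarrow> int list \<Rightarrow> 's fq" where
  "fq_pow x (y # ys) (e # es) = fq_pow (fq_act x y e) ys es"
| "fq_pow x _ _ = x"

inductive pres_cong :: "('s fq \<times> 's fq) set \<Rightarrow> 's fq \<Rightarrow> 's fq \<Rightarrow> bool" for R where
  prel: "(a, b) \<in> R \<Longrightarrow> pres_cong R a b"
| prefl: "pres_cong R a a"
| psym: "pres_cong R a b \<Longrightarrow> pres_cong R b a"
| ptrans: "pres_cong R a b \<Longrightarrow> pres_cong R b c \<Longrightarrow> pres_cong R a c"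
| pcong_op: "pres_cong R a a' \<Longrightarrow> pres_cong R b b' \<Longrightarrow> pres_cong R (fq_op a b) (fq_op a' b')"
| pcong_opinv: "pres_cong R a a' \<Longrightarrow> pres_cong R b b' \<Longrightarrow> pres_cong R (fq_opinv a b) (fq_opinv a' b')"

definition pres_proj :: "('s fq \<times> 's fq) set \<Rightarrow> 's fq \<Rightarrow> 's fq set" where
  "pres_proj R a = {b. pres_cong R a b}"

definition pres_carrier :: "('s fq \<times> 's fq) set \<Rightarrow> 's fq set set" where
  "pres_carrier R = range (pres_proj R)"

definition pres_op :: "('s fq \<times> 's fq) set \<Rightarrow> 's fq set \<Rightarrow> 's fq set \<Rightarrow> 's fq set" where
  "pres_op R p q = pres_proj R (fq_op (SOME a. a \<in> p) (SOME b. b \<in> q))"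

definition is_quandle_hom ::
  "'q set \<Rightarrow> ('q \<Rightarrow> 'q \<Rightarrow> 'q) \<Rightarrow> 'x set \<Rightarrow> ('x \<Rightarrow> 'x \<Rightarrow> 'x) \<Rightarrow> ('q \<Rightarrow> 'x) \<Rightarrow> bool" where
  "is_quandle_hom Q opQ X opX h \<longleftrightarrow>
     (\<forall>q\<in>Q. h q \<in> X) \<and> (\<forall>p\<in>Q. \<forall>q\<in>Q. h (opQ p q) = opX (h p) (h q))"

text \<open>D is the f-derivative with respect to the generator z, for an Alexander pair
  (f1, f2) already composed with the projection FQ(S) to Q.\<close>
definition is_fderiv ::
  "('s fq \<Rightarrow> 's fq \<Rightarrow> 'r::ring_1) \<Rightarrow> ('s fq \<Rightarrow> 's fq \<Rightarrow> 'r) \<Rightarrow> 's \<Rightarrow> ('s fq \<Rightarrow> 'r) \<Rightarrow> bool" where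
  "is_fderiv f1 f2 z D \<longleftrightarrow>
     (\<forall>x y. D (fq_op x y) = f1 x y * D x + f2 x y * D y) \<and>
     (\<forall>s. D (fq_gen s) = (if s = z then 1 else 0))"

text \<open>Group ring Z[A] is the type of finitely supported maps from a to int; the basis element 1.a is Poly_Mapping.single a 1.\<close>
definition grp_elem :: "'a::comm_monoid_add \<Rightarrow> 'a \<Rightarrow>\<^sub>0 int" where
  "grp_elem a = Poly_Mapping.single a 1"

end

theory Submission
  imports Defs
begin

text \<open>Since the second component of the Alexander pair vanishes, the derivative rule reads
  D(u^v) = 1\<cdot>\<theta>(u, v) D(u). Applied to u = x^(y^-1), using (x^(y^-1))^y = x and the fact
  that a \<mapsto> 1\<cdot>a is a homomorphism from A to the units of \<int>[A], it gives
  D(x^(y^-1)) = 1\<cdot>(-\<theta>(x^(y^-1), y)) D(x). Induction on the length of the exponent word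
  multiplies these factors.\<close>

lemma grp_elem_add: "grp_elem (a + b) = grp_elem a * grp_elem (b::'a::comm_monoid_add)"
  unfolding grp_elem_def by (simp add: mult_single)

lemma grp_elem_0: "grp_elem 0 = 1"
  unfolding grp_elem_def by (simp add: one_poly_mapping.abs_eq)

lemma fq_op_opinv: "fq_op (fq_opinv x y) y = x"
  by transfer (rule qinv1)

text \<open>signed_weight T u v \<epsilon> is the paper's \<epsilon> \<theta>(u^(v^((\<epsilon>-1)/2)), v); every \<epsilon> \<noteq> 1 is read
  as -1, matching fq_act.\<close>
definition signed_weight :: "('s fq \<Rightarrow> 's fq \<Rightarrow> 'a::ab_group_add) \<Rightarrow> 's fq \<Rightarrow> 's fq \<Rightarrow> int \<Rightarrow> 'a" where
  "signed_weight T u v e = (if e = 1 then T u v else - T (fq_opinv u v) v)"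

context
  fixes T :: "'s fq \<Rightarrow> 's fq \<Rightarrow> 'a::ab_group_add" and D :: "'s fq \<Rightarrow> ('a \<Rightarrow>\<^sub>0 int)"
  assumes D_fq_op: "\<And>u v. D (fq_op u v) = grp_elem (T u v) * D u"
begin

lemma D_fq_opinv: "D (fq_opinv u v) = grp_elem (- T (fq_opinv u v) v) * D u"
proof -
  let ?t = "T (fq_opinv u v) v"
  have "grp_elem (- ?t) * D u = grp_elem (- ?t) * D (fq_op (fq_opinv u v) v)"
    by (simp add: fq_op_opinv)
  also have "\<dots> = grp_elem (- ?t + ?t) * D (fq_opinv u v)"
    by (simp only: D_fq_op grp_elem_add mult.assoc)
  finally show ?thesis
    by (simp add: grp_elem_0)
qed

lemma D_fq_act: "D (fq_act u v e) = grp_elem (signed_weight T u v e) * D u"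
  unfolding fq_act_def signed_weight_def by (simp add: D_fq_op D_fq_opinv)

lemma D_fq_pow:
  "length es = length ys \<Longrightarrow>
   D (fq_pow x ys es) =
     grp_elem (\<Sum>i<length ys. signed_weight T (fq_pow x (take i ys) (take i es)) (ys ! i) (es ! i))
     * D x"
proof (induction ys arbitrary: x es)
  case Nil
  then show ?case by (simp add: grp_elem_0)
next
  case (Cons y ys)
  then obtain e es' where es: "es = e # es'" and len: "length es' = length ys"
    by (cases es) auto
  let ?w = "\<lambda>x' i. signed_weight T (fq_pow x' (take i ys) (take i es')) (ys ! i) (es' ! i)"
  have "D (fq_pow x (y # ys) es) = grp_elem (\<Sum>i<length ys. ?w (fq_act x y e) i) * D (fq_act x y e)"
    using Cons.IH[OF len] by (simp add: es)
  also have "\<dots> = grp_elem (signed_weight T x y e + (\<Sum>i<length ys. ?w (fq_act x y e) i)) * D x"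
    by (simp add: D_fq_act grp_elem_add add.commute mult.assoc)
  also have "signed_weight T x y e + (\<Sum>i<length ys. ?w (fq_act x y e) i)
      = (\<Sum>i<length (y # ys). signed_weight T (fq_pow x (take i (y # ys)) (take i es))
                                 ((y # ys) ! i) (es ! i))"
    by (simp only: es length_Cons sum.lessThan_Suc_shift) simp
  finally show ?case .
qed

end

theorem proposition3p3:
  fixes R :: "('s fq \<times> 's fq) set"
    and X :: "'x set" and opX :: "'x \<Rightarrow> 'x \<Rightarrow> 'x"
    and \<theta> :: "'x \<Rightarrow> 'x \<Rightarrow> 'a::ab_group_add"
    and \<psi> :: "'s fq set \<Rightarrow> 'x"
    and z :: 's and D :: "'s fq \<Rightarrow> ('a \<Rightarrow>\<^sub>0 int)"
    and x :: "'s fq" and ys :: "'s fq list" and es :: "int list"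
  assumes "finite (UNIV :: 's set)" and "finite R"
    and "is_quandle X opX"
    and "is_quandle_2cocycle X opX \<theta>"
    and "is_quandle_hom (pres_carrier R) (pres_op R) X opX \<psi>"
    and "is_fderiv (\<lambda>u v. grp_elem (\<theta> (\<psi> (pres_proj R u)) (\<psi> (pres_proj R v))))
                   (\<lambda>u v. 0) z D"
    and "length es = length ys"
    and "\<forall>e\<in>set es. e = 1 \<or> e = -1"
  shows "D (fq_pow x ys es) =
           grp_elem (\<Sum>i<length ys.
              (if es ! i = 1
               then \<theta> (\<psi> (pres_proj R (fq_pow x (take i ys) (take i es))))
                       (\<psi> (pres_proj R (ys ! i)))
               else - \<theta> (\<psi> (pres_proj R (fq_opinv (fq_pow x (take i ys) (take i es)) (ys ! i))))
                       (\<psi> (pres_proj R (ys ! i)))))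
           * D x"
proof -
  let ?T = "\<lambda>u v. \<theta> (\<psi> (pres_proj R u)) (\<psi> (pres_proj R v))"
  have "D (fq_op u v) = grp_elem (?T u v) * D u" for u v
    using assms(6) unfolding is_fderiv_def by simp
  from D_fq_pow[OF this assms(7)] show ?thesis
    by (simp add: signed_weight_def)
qed

end
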